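(* For $n\ge1$, the sum of the semi-perimeters of all members of $I_n$ is $\frac{1}{12}(n^2+15n+8)\,n!$.
   Context: An inversion sequence of length $n$ is a sequence $\rho=\rho_1\cdots\rho_n$ of integers with $1\le \rho_i\le i$ for all $i$; $I_n$ is the set of these. Represent $\rho$ as a bargraph whose $i$-th column has $\rho_i$ unit cells standing on the $x$-axis. The semi-perimeter of $\rho$ is half the perimeter of this bargraph (bottom boundary included), i.e. $n+\rho_1+\sum_{i=1}^{n-1}\max(\rho_{i+1}-\rho_i,0)$. *)

theory Defs
  imports Complex_Main
begin

text \<open>Inversion sequences of length n, represented as lists (0-indexed):
  the entry at position i (0-based) corresponds to rho_(i+1) and must satisfy 1 <= rho_(i+1) <= i+1.\<close>
definition inv_seqs :: "nat \<Rightarrow> nat list set" where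
  "inv_seqs n = {rho. length rho = n \<and> (\<forall>i<n. 1 \<le> rho ! i \<and> rho ! i \<le> i + 1)}"

definition semi_perimeter :: "nat list \<Rightarrow> int" where
  "semi_perimeter rho = int (length rho) + int (rho ! 0)
     + (\<Sum>i = 1..length rho - 1. max (int (rho ! i) - int (rho ! (i - 1))) 0)"

end

theory Submission
  imports Defs
begin

text \<open>Every \<open>\<rho> \<in> I\<^sub>n\<^sub>+\<^sub>1\<close> is uniquely \<open>\<sigma> x\<close> with \<open>\<sigma> \<in> I\<^sub>n\<close> and \<open>1 \<le> x \<le> n + 1\<close>, and appending
  \<open>x\<close> adds \<open>1 + max (x - \<sigma>\<^sub>n) 0\<close> to the semi-perimeter. Over \<open>I\<^sub>n\<close> the last entry \<open>\<sigma>\<^sub>n\<close> takes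
  each value in \<open>{1..n}\<close> exactly \<open>(n - 1)!\<close> times, and
  \<open>\<Sum>a=1..n. \<Sum>x=1..n+1. max (x - a) 0 = n (n + 1) (n + 2) / 6\<close>. Hence the total
  semi-perimeter \<open>S\<^sub>n\<close> satisfies
  \<open>S\<^sub>n\<^sub>+\<^sub>1 = (n + 1) (S\<^sub>n + n!) + (n - 1)! n (n + 1) (n + 2) / 6\<close>,
  which the closed form solves by induction.\<close>

lemma inv_seqs_Suc:
  "inv_seqs (Suc n) = (\<lambda>(r, x). r @ [x]) ` (inv_seqs n \<times> {1..Suc n})"
proof
  show "inv_seqs (Suc n) \<subseteq> (\<lambda>(r, x). r @ [x]) ` (inv_seqs n \<times> {1..Suc n})"
  proof
    fix rho assume rho: "rho \<in> inv_seqs (Suc n)"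
    then have len: "length rho = Suc n" by (simp add: inv_seqs_def)
    then have split: "rho = butlast rho @ [last rho]"
      by (metis append_butlast_last_id list.size(3) nat.distinct(1))
    have last: "last rho = rho ! n"
      using len by (subst last_conv_nth) auto
    have "butlast rho \<in> inv_seqs n"
      using rho len by (auto simp: inv_seqs_def nth_butlast)
    moreover have "last rho \<in> {1..Suc n}"
      using rho last by (simp add: inv_seqs_def)
    ultimately show "rho \<in> (\<lambda>(r, x). r @ [x]) ` (inv_seqs n \<times> {1..Suc n})"
      using split by (auto intro!: image_eqI[where x = "(butlast rho, last rho)"])
  qed
next
  show "(\<lambda>(r, x). r @ [x]) ` (inv_seqs n \<times> {1..Suc n}) \<subseteq> inv_seqs (Suc n)"
    by (auto simp: inv_seqs_def nth_append less_Suc_eq)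
qed

lemma sum_inv_seqs_Suc:
  "(\<Sum>rho\<in>inv_seqs (Suc n). f rho) = (\<Sum>r\<in>inv_seqs n. \<Sum>x=1..Suc n. f (r @ [x]))"
proof -
  have "inj_on (\<lambda>(r, x). r @ [x]) (inv_seqs n \<times> {1..Suc n})"
    by (auto simp: inj_on_def)
  then have "(\<Sum>rho\<in>inv_seqs (Suc n). f rho)
      = (\<Sum>(r, x)\<in>inv_seqs n \<times> {1..Suc n}. f (r @ [x]))"
    unfolding inv_seqs_Suc by (simp only: sum.reindex comp_def case_prod_beta')
  also have "\<dots> = (\<Sum>r\<in>inv_seqs n. \<Sum>x=1..Suc n. f (r @ [x]))"
    by (rule sum.cartesian_product[symmetric])
  finally show ?thesis .
qed

lemma inv_seqs_0: "inv_seqs 0 = {[]}"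
  by (auto simp: inv_seqs_def)

lemma card_inv_seqs: "card (inv_seqs n) = fact n"
proof (induction n)
  case 0
  then show ?case by (simp add: inv_seqs_0)
next
  case (Suc n)
  have "card (inv_seqs (Suc n)) = (\<Sum>r\<in>inv_seqs n. \<Sum>x=1..Suc n. 1)"
    using sum_inv_seqs_Suc[of "\<lambda>_. 1 :: nat" n] by simp
  also have "\<dots> = fact n * Suc n" using Suc.IH by simp
  finally show ?case by (simp add: algebra_simps)
qed

lemma sum_inv_seqs_last:
  "(\<Sum>r\<in>inv_seqs (Suc m). g (last r)) = fact m * (\<Sum>a=1..Suc m. g a)"
proof -
  have "(\<Sum>r\<in>inv_seqs (Suc m). g (last r)) = (\<Sum>r\<in>inv_seqs m. \<Sum>x=1..Suc m. g x)"
    by (simp add: sum_inv_seqs_Suc)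
  then show ?thesis by (simp add: card_inv_seqs)
qed

lemma semi_perimeter_snoc:
  assumes "r \<noteq> []"
  shows "semi_perimeter (r @ [x]) = semi_perimeter r + 1 + int (x - last r)"
proof -
  obtain m where len: "length r = Suc m"
    using assms by (cases r) auto
  have "max (int x - int (last r)) 0 = int (x - last r)" by simp
  moreover have "(\<Sum>i = 1..m. max (int ((r @ [x]) ! i) - int ((r @ [x]) ! (i - 1))) 0)
      = (\<Sum>i = 1..m. max (int (r ! i) - int (r ! (i - 1))) 0)"
    using len by (intro sum.cong) (auto simp: nth_append)
  ultimately show ?thesis
    using assms len by (simp add: semi_perimeter_def nth_append last_conv_nth)
qed

lemma sum_truncated_diff: "2 * (\<Sum>x=1..k. x - a) = (k - a) * (k - a + 1 :: nat)"
proof (induction k)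
  case (Suc k)
  then show ?case
    by (cases "a \<le> k") (simp_all add: Suc_diff_le algebra_simps)
qed simp

lemma sum_pronic: "3 * (\<Sum>j=1..n. j * (j + 1)) = n * (n + 1) * (n + 2 :: nat)"
  by (induction n) (simp_all add: algebra_simps)

lemma sum_ascents: "6 * (\<Sum>a=1..n. \<Sum>x=1..Suc n. x - a) = n * (n + 1) * (n + 2 :: nat)"
proof -
  have "2 * (\<Sum>a=1..n. \<Sum>x=1..Suc n. x - a) = (\<Sum>a=1..n. (Suc n - a) * (Suc n - a + 1))"
    unfolding sum_truncated_diff[symmetric] by (rule sum_distrib_left)
  also have "\<dots> = (\<Sum>j=1..n. j * (j + 1))"
    by (subst sum.atLeastAtMost_rev) (intro sum.cong refl, auto)
  finally show ?thesis
    using sum_pronic[of n] by linarith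
qed

lemma sum_semi_perimeter_inv_seqs_Suc:
  "(\<Sum>rho\<in>inv_seqs (Suc (Suc m)). semi_perimeter rho)
     = int (m + 2) * ((\<Sum>rho\<in>inv_seqs (Suc m). semi_perimeter rho) + fact (Suc m))
       + fact m * int (\<Sum>a=1..Suc m. \<Sum>x=1..Suc (Suc m). x - a)"
  (is "?S (Suc m) = _")
proof -
  let ?g = "\<lambda>a. \<Sum>x=1..Suc (Suc m). x - a"
  have "?S (Suc m) = (\<Sum>r\<in>inv_seqs (Suc m). \<Sum>x=1..Suc (Suc m). semi_perimeter (r @ [x]))"
    by (rule sum_inv_seqs_Suc)
  also have "\<dots> = (\<Sum>r\<in>inv_seqs (Suc m).
      \<Sum>x=1..Suc (Suc m). semi_perimeter r + 1 + int (x - last r))"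
    by (intro sum.cong refl semi_perimeter_snoc) (auto simp: inv_seqs_def)
  also have "\<dots> = (\<Sum>r\<in>inv_seqs (Suc m). int (m + 2) * (semi_perimeter r + 1) + int (?g (last r)))"
    by (simp add: sum.distrib)
  also have "\<dots> = int (m + 2) * (?S m + int (card (inv_seqs (Suc m))))
      + (\<Sum>r\<in>inv_seqs (Suc m). int (?g (last r)))"
    by (simp add: sum.distrib sum_distrib_left algebra_simps)
  also have "(\<Sum>r\<in>inv_seqs (Suc m). int (?g (last r))) = fact m * (\<Sum>a=1..Suc m. int (?g a))"
    by (rule sum_inv_seqs_last)
  finally show ?thesis
    by (simp only: card_inv_seqs of_nat_fact of_nat_sum)
qed

lemma sum_semi_perimeter_inv_seqs:
  "12 * (\<Sum>rho\<in>inv_seqs (Suc m). semi_perimeter rho)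
     = (int (Suc m) ^ 2 + 15 * int (Suc m) + 8) * fact (Suc m)"
  (is "12 * ?S m = ?closed m")
proof (induction m)
  case 0
  have "inv_seqs (Suc 0) = {[1]}"
    by (simp add: inv_seqs_Suc inv_seqs_0)
  then show ?case by (simp add: semi_perimeter_def)
next
  case (Suc m)
  define D where "D = (\<Sum>a=1..Suc m. \<Sum>x=1..Suc (Suc m). x - a)"
  have "int (6 * D) = int (Suc m * (Suc m + 1) * (Suc m + 2))"
    unfolding D_def sum_ascents ..
  then have ascents: "6 * int D = (int m + 1) * (int m + 2) * (int m + 3)"
    by (simp only: of_nat_mult of_nat_add of_nat_Suc of_nat_numeral) (simp add: algebra_simps)
  have "12 * ?S (Suc m)
      = (int m + 2) * (12 * ?S m) + 12 * (int m + 2) * fact (Suc m) + 2 * fact m * (6 * int D)"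
    unfolding sum_semi_perimeter_inv_seqs_Suc D_def by (simp add: algebra_simps)
  also have "\<dots> = ?closed (Suc m)"
    unfolding Suc.IH ascents by (simp add: algebra_simps power2_eq_square)
  finally show ?case .
qed

theorem corollary2p4:
  fixes n :: nat
  assumes "n \<ge> 1"
  shows "real_of_int (\<Sum>rho\<in>inv_seqs n. semi_perimeter rho)
         = (1 / 12) * (real n ^ 2 + 15 * real n + 8) * real (fact n)"
proof -
  obtain m where n: "n = Suc m"
    using assms by (cases n) auto
  have "real_of_int (12 * (\<Sum>rho\<in>inv_seqs n. semi_perimeter rho))
      = real_of_int ((int n ^ 2 + 15 * int n + 8) * fact n)"
    unfolding n sum_semi_perimeter_inv_seqs ..
  then show ?thesis
    by (simp add: of_int_fact)
qed

end
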